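(* Consider the Biased Preferential Attachment Model (BPAM) with two communities, minority ratio $r$ and homophily parameter $\rho$, with asymptotic red edge fraction $\alpha$ and quantities $q_{BB}, q_{RB}$ and $\tilde d^{in}_t(B)$ as defined in the context. For every integer $t \geq 2$ the multiplicative factors $MF^{(t)}(B) = q_{BB}\,\tilde d^{in}_t(B)$ and $MF^{(t)}(R) = q_{RB}\,\tilde d^{in}_t(B)$ satisfy $$MF^{(t)}(B) \geq MF^{(t)}(R)$$ for all $0 \leq r \leq 0.5$ and all $0 \leq \rho \leq 1$.
   Context: The BPAM with two communities (red $R$, blue $B$) grows a directed network one node at a time. A new node $u$ is labeled $R$ with probability $r$ and $B$ with probability $1-r$, where $0\le r\le 1/2$, so red is the minority. The node $u$ then picks a target $v$ with probability proportional to its current degree, $\mathbb{P}(v \text{ chosen}) = d_t(v)/\sum_{w} d_t(w)$. If $u$ and $v$ have the same label, the directed edge $(u,v)$ is created. If the labels differ, the edge is accepted with probability $\rho\in[0,1]$, and otherwise the choice is repeated until an edge is formed. This process is repeated $d$ times, so that every node has outdegree $d$. The network has $N$ nodes. Let $\alpha_N$ be the total degree of red nodes divided by the total degree $2Nd$, and let $\alpha=\lim_{N\to\infty}\mathbb{E}[\alpha_N]$. It is known that $\alpha<r$ (the power inequality). Define $$p^{out}_{RB}=\frac{\rho(1-\alpha)}{\alpha+\rho(1-\alpha)},\qquad p^{out}_{BB}=\frac{1-\alpha}{\rho\alpha+1-\alpha}.$$ Let $D_B=\frac{r\rho}{\alpha+\rho(1-\alpha)}+\frac{1-r}{\alpha\rho+1-\alpha}$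 and $D_R=\frac{r}{\alpha+\rho(1-\alpha)}+\frac{\rho(1-r)}{\alpha\rho+1-\alpha}$. Define $$p^{in}_{BB}=\frac{(1-r)/(\alpha\rho+1-\alpha)}{D_B},\qquad p^{in}_{BR}=\frac{\rho r/(\alpha+\rho(1-\alpha))}{D_B},$$ $$p^{in}_{RR}=\frac{r/(\alpha+\rho(1-\alpha))}{D_R},\qquad p^{in}_{RB}=\frac{\rho(1-r)/(\alpha\rho+1-\alpha)}{D_R}.$$ Set $$q_{BB}=p^{in}_{BB}p^{out}_{BB}+p^{in}_{BR}p^{out}_{RB},\qquad q_{RB}=p^{in}_{RB}p^{out}_{BB}+p^{in}_{RR}p^{out}_{RB}.$$ These are the probabilities that a node of color $B$ (respectively $R$) has an in-neighbor which in turn has an out-edge to a blue node. The size-biased $t$-th indegree moment of the blue community is $$\tilde d^{in}_t(B)=\frac{\sum_{u\in B}(d^{in}(u))^t}{\sum_{u\in B}d^{in}(u)}.$$ In the paper's mean-field analysis of HITS, the authority score after $t$ iterations is approximated by $a^{(t)}(v\in C)\approx d^{in}(v)(d-1)MF^{(t)}(C)$. Here the multiplicative factors are $MF^{(t)}(R)=q_{RB}\tilde d^{in}_t(B)$ and $MF^{(t)}(B)=q_{BB}\tilde d^{in}_t(B)$. *)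

theory Defs
  imports Complex_Main
begin

definition p_out_RB :: "real \<Rightarrow> real \<Rightarrow> real" where
  "p_out_RB rho \<alpha> = rho * (1 - \<alpha>) / (\<alpha> + rho * (1 - \<alpha>))"

definition p_out_BB :: "real \<Rightarrow> real \<Rightarrow> real" where
  "p_out_BB rho \<alpha> = (1 - \<alpha>) / (rho * \<alpha> + 1 - \<alpha>)"

definition D_B :: "real \<Rightarrow> real \<Rightarrow> real \<Rightarrow> real" where
  "D_B r rho \<alpha> = r * rho / (\<alpha> + rho * (1 - \<alpha>)) + (1 - r) / (\<alpha> * rho + 1 - \<alpha>)"

definition D_R :: "real \<Rightarrow> real \<Rightarrow> real \<Rightarrow> real" where
  "D_R r rho \<alpha> = r / (\<alpha> + rho * (1 - \<alpha>)) + rho * (1 - r) / (\<alpha> * rho + 1 - \<alpha>)"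

definition p_in_BB :: "real \<Rightarrow> real \<Rightarrow> real \<Rightarrow> real" where
  "p_in_BB r rho \<alpha> = ((1 - r) / (\<alpha> * rho + 1 - \<alpha>)) / D_B r rho \<alpha>"

definition p_in_BR :: "real \<Rightarrow> real \<Rightarrow> real \<Rightarrow> real" where
  "p_in_BR r rho \<alpha> = (rho * r / (\<alpha> + rho * (1 - \<alpha>))) / D_B r rho \<alpha>"

definition p_in_RR :: "real \<Rightarrow> real \<Rightarrow> real \<Rightarrow> real" where
  "p_in_RR r rho \<alpha> = (r / (\<alpha> + rho * (1 - \<alpha>))) / D_R r rho \<alpha>"

definition p_in_RB :: "real \<Rightarrow> real \<Rightarrow> real \<Rightarrow> real" where
  "p_in_RB r rho \<alpha> = (rho * (1 - r) / (\<alpha> * rho + 1 - \<alpha>)) / D_R r rho \<alpha>"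

definition q_BB :: "real \<Rightarrow> real \<Rightarrow> real \<Rightarrow> real" where
  "q_BB r rho \<alpha> = p_in_BB r rho \<alpha> * p_out_BB rho \<alpha> + p_in_BR r rho \<alpha> * p_out_RB rho \<alpha>"

definition q_RB :: "real \<Rightarrow> real \<Rightarrow> real \<Rightarrow> real" where
  "q_RB r rho \<alpha> = p_in_RB r rho \<alpha> * p_out_BB rho \<alpha> + p_in_RR r rho \<alpha> * p_out_RB rho \<alpha>"

definition sb_moment :: "'v set \<Rightarrow> ('v \<Rightarrow> nat) \<Rightarrow> nat \<Rightarrow> real" where
  "sb_moment Bc indeg t = (\<Sum>u\<in>Bc. real (indeg u) ^ t) / (\<Sum>u\<in>Bc. real (indeg u))"

definition MF_B :: "real \<Rightarrow> real \<Rightarrow> real \<Rightarrow> 'v set \<Rightarrow> ('v \<Rightarrow> nat) \<Rightarrow> nat \<Rightarrow> real" where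
  "MF_B r rho \<alpha> Bc indeg t = q_BB r rho \<alpha> * sb_moment Bc indeg t"

definition MF_R :: "real \<Rightarrow> real \<Rightarrow> real \<Rightarrow> 'v set \<Rightarrow> ('v \<Rightarrow> nat) \<Rightarrow> nat \<Rightarrow> real" where
  "MF_R r rho \<alpha> Bc indeg t = q_RB r rho \<alpha> * sb_moment Bc indeg t"

end

theory Submission
  imports Defs
begin

text \<open>Both q_BB and q_RB are weighted means of the two out-probabilities
p_out_BB and p_out_RB, with weights read off from the in-probabilities.
Homophily (rho \<le> 1) makes p_out_RB \<le> p_out_BB, and it also shifts the weights
of q_BB towards p_out_BB relative to those of q_RB, because the ratio of the
weights drops by the factor rho squared. Hence q_RB \<le> q_BB, and the size-biased
moment is a common nonnegative factor; the argument works for every t.\<close>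

lemma weighted_mean_le_weighted_mean:
  fixes P Q u v u' v' :: real
  assumes "Q \<le> P" "0 \<le> Q"
    and "0 \<le> u" "0 \<le> v" "0 \<le> u'" "0 \<le> v'" "0 < u' + v'"
    and "u * v' \<le> u' * v"
  shows "(u * P + v * Q) / (u + v) \<le> (u' * P + v' * Q) / (u' + v')"
proof (cases "u + v = 0")
  case True
  \<comment> \<open>The left side is then 0 (x / 0 = 0); this junk case occurs for q_RB at rho = alpha = 0.\<close>
  have "0 \<le> (u' * P + v' * Q) / (u' + v')"
    using assms by (intro divide_nonneg_nonneg add_nonneg_nonneg mult_nonneg_nonneg) auto
  then show ?thesis using True by simp
next
  case False
  then have "0 < u + v" using assms by linarith
  moreover have "(u * P + v * Q) * (u' + v') - (u' * P + v' * Q) * (u + v)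
      = (P - Q) * (u * v' - u' * v)"
    by (simp add: algebra_simps)
  moreover have "(P - Q) * (u * v' - u' * v) \<le> 0"
    using assms by (intro mult_nonneg_nonpos) auto
  ultimately show ?thesis using \<open>0 < u' + v'\<close> by (simp add: divide_simps)
qed

lemma p_out_RB_le_p_out_BB:
  assumes "0 \<le> rho" "rho \<le> 1" "0 \<le> \<alpha>" "\<alpha> < 1"
  shows "p_out_RB rho \<alpha> \<le> p_out_BB rho \<alpha>"
proof -
  define a where "a = \<alpha> + rho * (1 - \<alpha>)"
  define b where "b = rho * \<alpha> + 1 - \<alpha>"
  have "0 < b" using assms unfolding b_def by (smt (verit) mult_nonneg_nonneg)
  have "0 \<le> a" using assms unfolding a_def by simp
  have "rho * b \<le> a"
  proof -
    have "a - rho * b = \<alpha> * (1 - rho\<^sup>2)"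
      unfolding a_def b_def by (simp add: algebra_simps power2_eq_square)
    moreover have "0 \<le> \<alpha> * (1 - rho\<^sup>2)"
      using assms by (simp add: power_le_one)
    ultimately show ?thesis by linarith
  qed
  then have "rho * (1 - \<alpha>) * b \<le> (1 - \<alpha>) * a"
    using assms by (simp add: mult.assoc mult.left_commute mult_left_mono)
  then show ?thesis
    unfolding p_out_RB_def p_out_BB_def a_def[symmetric] b_def[symmetric]
    using assms \<open>0 < b\<close> \<open>0 \<le> a\<close> by (cases "a = 0") (simp_all add: divide_simps)
qed

definition in_weight_R :: "real \<Rightarrow> real \<Rightarrow> real \<Rightarrow> real" where
  "in_weight_R r rho \<alpha> = r / (\<alpha> + rho * (1 - \<alpha>))"

definition in_weight_B :: "real \<Rightarrow> real \<Rightarrow> real \<Rightarrow> real" where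
  "in_weight_B r rho \<alpha> = (1 - r) / (\<alpha> * rho + 1 - \<alpha>)"

lemma q_BB_as_weighted_mean:
  "q_BB r rho \<alpha> =
    (in_weight_B r rho \<alpha> * p_out_BB rho \<alpha> + rho * in_weight_R r rho \<alpha> * p_out_RB rho \<alpha>)
      / (in_weight_B r rho \<alpha> + rho * in_weight_R r rho \<alpha>)"
  unfolding q_BB_def p_in_BB_def p_in_BR_def D_B_def in_weight_R_def in_weight_B_def
  by (simp add: add_divide_distrib add.commute mult.commute)

lemma q_RB_as_weighted_mean:
  "q_RB r rho \<alpha> =
    (rho * in_weight_B r rho \<alpha> * p_out_BB rho \<alpha> + in_weight_R r rho \<alpha> * p_out_RB rho \<alpha>)
      / (rho * in_weight_B r rho \<alpha> + in_weight_R r rho \<alpha>)"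
  unfolding q_RB_def p_in_RB_def p_in_RR_def D_R_def in_weight_R_def in_weight_B_def
  by (simp add: add_divide_distrib add.commute mult.commute)

lemma q_RB_le_q_BB:
  assumes "0 \<le> r" "r < 1" "0 \<le> rho" "rho \<le> 1" "0 \<le> \<alpha>" "\<alpha> < 1"
  shows "q_RB r rho \<alpha> \<le> q_BB r rho \<alpha>"
proof -
  let ?wR = "in_weight_R r rho \<alpha>" and ?wB = "in_weight_B r rho \<alpha>"
  have "0 \<le> ?wR"
    using assms unfolding in_weight_R_def by simp
  have "0 < ?wB"
    using assms unfolding in_weight_B_def by (smt (verit) divide_pos_pos mult_nonneg_nonneg)
  have "0 \<le> p_out_RB rho \<alpha>"
    using assms unfolding p_out_RB_def by simp
  have "rho * ?wB * (rho * ?wR) \<le> ?wB * ?wR"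
  proof -
    have "rho * rho \<le> 1" using assms by (simp add: mult_le_one)
    then have "rho * rho * (?wB * ?wR) \<le> ?wB * ?wR"
      using \<open>0 \<le> ?wR\<close> \<open>0 < ?wB\<close> by (simp add: mult_left_le_one_le)
    then show ?thesis by (simp add: ac_simps)
  qed
  then show ?thesis
    unfolding q_BB_as_weighted_mean q_RB_as_weighted_mean
    using assms \<open>0 \<le> ?wR\<close> \<open>0 < ?wB\<close> \<open>0 \<le> p_out_RB rho \<alpha>\<close>
    by (intro weighted_mean_le_weighted_mean p_out_RB_le_p_out_BB) (auto simp: add_pos_nonneg)
qed

lemma sb_moment_nonneg: "0 \<le> sb_moment Bc indeg t"
  unfolding sb_moment_def by (intro divide_nonneg_nonneg sum_nonneg) auto

theorem proposition1:
  fixes r rho \<alpha> :: real and Bc :: "'v set" and indeg :: "'v \<Rightarrow> nat" and t :: nat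
  assumes "0 \<le> r" and "r \<le> 1/2"
    and "0 \<le> rho" and "rho \<le> 1"
    and "0 \<le> \<alpha>" and "\<alpha> \<le> r"
    and "finite Bc"
    and "t \<ge> 2"
  shows "MF_B r rho \<alpha> Bc indeg t \<ge> MF_R r rho \<alpha> Bc indeg t"
proof -
  have "q_RB r rho \<alpha> \<le> q_BB r rho \<alpha>"
    using assms by (intro q_RB_le_q_BB) auto
  then show ?thesis
    unfolding MF_B_def MF_R_def using sb_moment_nonneg by (rule mult_right_mono)
qed

end
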